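(* Let $d\ge 2$ and $N\ge 2$ be integers, let $X=\{x^1,\dots,x^N\}\subseteq\mathbb{R}^d$, and let $C\subseteq\mathbb{R}^d$ be a proper closed convex cone which is pointed (i.e. $C\cap(-C)=\{0\}$) and polyhedral (i.e. an intersection of finitely many closed halfspaces). If $\bar x\in X$ satisfies $r_{X,C}(\bar x)=\max_{x\in X} r_{X,C}(x)$, then $\bar x$ is maximal in $X$ with respect to $\leq_C$. The converse is not true in general: there exist such $X$ and $C$ and an element of $X$ that is maximal in $X$ with respect to $\leq_C$ but does not maximize $r_{X,C}$ over $X$.
   Context: A proper closed convex cone $C\subseteq\mathbb{R}^d$ is a closed set with $sC=C$ for all $s\ge 0$, $C+C=C$, and $C\notin\{\varnothing,\mathbb{R}^d\}$; it induces the preorder $y\leq_C z$ iff $z-y\in C$. The dual cone is $C^+=\{v\in\mathbb{R}^d\mid \forall z\in C: v^\top z\ge 0\}$, and for $w\in\mathbb{R}^d$, $H^+(w)=\{z\in\mathbb{R}^d\mid w^\top z\ge 0\}$. The cone ranking function is $r_{X,C}(z)=\min_{w\in C^+}\#\{x\in X\mid w^\top x\le w^\top z\}$ for $z\in\mathbb{R}^d$ ($\#$ = cardinality). A point $\bar x\in X$ is maximal in $X$ with respect to $\leq_C$ if for every $x\in X$ with $\bar x\leq_C x$ one has $x\leq_C\bar x$. *)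

theory Defs
  imports "HOL-Analysis.Analysis"
begin

definition proper_closed_convex_cone :: "'a::euclidean_space set \<Rightarrow> bool" where
  "proper_closed_convex_cone C \<longleftrightarrow>
     closed C \<and> (\<forall>s\<ge>0. \<forall>z\<in>C. s *\<^sub>R z \<in> C) \<and> (\<forall>y\<in>C. \<forall>z\<in>C. y + z \<in> C)
     \<and> C \<noteq> {} \<and> C \<noteq> UNIV"

definition pointed_cone :: "'a::euclidean_space set \<Rightarrow> bool" where
  "pointed_cone C \<longleftrightarrow> C \<inter> uminus ` C = {0}"

definition cone_le :: "'a::euclidean_space set \<Rightarrow> 'a \<Rightarrow> 'a \<Rightarrow> bool" where
  "cone_le C y z \<longleftrightarrow> z - y \<in> C"

definition dual_cone :: "'a::euclidean_space set \<Rightarrow> 'a set" where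
  "dual_cone C = {v. \<forall>z\<in>C. v \<bullet> z \<ge> 0}"

definition cone_rank :: "'a::euclidean_space set \<Rightarrow> 'a set \<Rightarrow> 'a \<Rightarrow> nat" where
  "cone_rank X C z = Min ((\<lambda>w. card {x\<in>X. w \<bullet> x \<le> w \<bullet> z}) ` dual_cone C)"

definition cone_maximal :: "'a::euclidean_space set \<Rightarrow> 'a set \<Rightarrow> 'a \<Rightarrow> bool" where
  "cone_maximal X C xb \<longleftrightarrow> xb \<in> X \<and> (\<forall>x\<in>X. cone_le C xb x \<longrightarrow> cone_le C x xb)"

end

theory Submission
  imports Defs
begin

text \<open>If \<open>xb \<le>\<^sub>C x\<close> but not \<open>x \<le>\<^sub>C xb\<close>, separating \<open>xb - x\<close> from the closed convex
  cone \<open>C\<close> gives \<open>v \<in> C\<^sup>+\<close> with \<open>v \<bullet> xb < v \<bullet> x\<close>. Perturbing a functional \<open>w\<^sub>0\<close> that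
  attains \<open>r(x)\<close> to \<open>t w\<^sub>0 + v\<close> with \<open>t\<close> large keeps the sublevel set of \<open>x\<close> inside that
  of \<open>w\<^sub>0\<close>, while \<open>x\<close> drops out of the sublevel set of \<open>xb\<close>; hence \<open>r(xb) < r(x)\<close>, and a
  rank maximiser is maximal. Conversely, for the nonnegative orthant and
  \<open>X = {2e\<^sub>1, 2e\<^sub>2, e\<^sub>1 + e\<^sub>2}\<close>, the point \<open>2e\<^sub>1\<close> is maximal but has rank 1
  (take \<open>w = e\<^sub>2\<close>), whereas \<open>e\<^sub>1 + e\<^sub>2\<close> has rank 2: every linear functional is at most
  its value at \<open>e\<^sub>1 + e\<^sub>2\<close> at \<open>2e\<^sub>1\<close> or at \<open>2e\<^sub>2\<close>.\<close>

lemma proper_closed_convex_cone_zero: "proper_closed_convex_cone C \<Longrightarrow> 0 \<in> C"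
  unfolding proper_closed_convex_cone_def by (metis all_not_in_conv order_refl scaleR_zero_left)

lemma proper_closed_convex_cone_convex: "proper_closed_convex_cone C \<Longrightarrow> convex C"
  unfolding proper_closed_convex_cone_def convex_def by simp

lemma zero_in_dual_cone: "0 \<in> dual_cone C"
  by (simp add: dual_cone_def)

lemma dual_cone_separation:
  assumes C: "proper_closed_convex_cone C" and "z \<notin> C"
  shows "\<exists>v\<in>dual_cone C. v \<bullet> z < 0"
proof -
  obtain a b where az: "a \<bullet> z < b" and aC: "\<forall>x\<in>C. b < a \<bullet> x"
    using separating_hyperplane_closed_point[OF proper_closed_convex_cone_convex[OF C] _ \<open>z \<notin> C\<close>]
      C unfolding proper_closed_convex_cone_def by blast
  have "b < 0" using aC proper_closed_convex_cone_zero[OF C] by force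
  have "a \<in> dual_cone C"
    unfolding dual_cone_def
  proof (clarify, rule ccontr)
    fix x assume "x \<in> C" and neg: "\<not> 0 \<le> a \<bullet> x"
    define s where "s = b / (a \<bullet> x)"
    have "s \<ge> 0" unfolding s_def using neg \<open>b < 0\<close> by (simp add: divide_nonpos_neg)
    with C \<open>x \<in> C\<close> have "s *\<^sub>R x \<in> C" unfolding proper_closed_convex_cone_def by blast
    then have "b < a \<bullet> (s *\<^sub>R x)" using aC by blast
    moreover have "a \<bullet> (s *\<^sub>R x) = b" unfolding s_def using neg by simp
    ultimately show False by simp
  qed
  with az \<open>b < 0\<close> show ?thesis by force
qed

lemma finite_card_sublevel_image:
  assumes "finite X"
  shows "finite ((\<lambda>w. card {x\<in>X. w \<bullet> x \<le> w \<bullet> z}) ` D)"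
  by (rule finite_subset[of _ "{..card X}"]) (use assms in \<open>auto intro: card_mono\<close>)

lemma cone_rank_le:
  assumes "finite X" "w \<in> dual_cone C"
  shows "cone_rank X C z \<le> card {x\<in>X. w \<bullet> x \<le> w \<bullet> z}"
  unfolding cone_rank_def using assms finite_card_sublevel_image[OF assms(1)] by (intro Min_le) auto

lemma cone_rank_attained:
  assumes "finite X"
  obtains w where "w \<in> dual_cone C" "cone_rank X C z = card {x\<in>X. w \<bullet> x \<le> w \<bullet> z}"
proof -
  have "cone_rank X C z \<in> (\<lambda>w. card {x\<in>X. w \<bullet> x \<le> w \<bullet> z}) ` dual_cone C"
    unfolding cone_rank_def using finite_card_sublevel_image[OF assms] zero_in_dual_cone
    by (intro Min_in) auto
  with that show ?thesis by blast
qed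

lemma cone_rank_ge:
  assumes "finite X" "\<And>w. w \<in> dual_cone C \<Longrightarrow> k \<le> card {x\<in>X. w \<bullet> x \<le> w \<bullet> z}"
  shows "k \<le> cone_rank X C z"
  using cone_rank_attained[OF assms(1)] assms(2) by metis

lemma eventually_linear_pos: "0 < (a::real) \<Longrightarrow> eventually (\<lambda>t. 0 < t * a + b) at_top"
  using eventually_gt_at_top[of "- b / a"] by eventually_elim (simp add: field_simps)

lemma eventually_sublevel_perturbation_subset:
  fixes u v x :: "'a::real_inner"
  assumes "finite X"
  shows "eventually (\<lambda>t. {y\<in>X. (t *\<^sub>R u + v) \<bullet> y \<le> (t *\<^sub>R u + v) \<bullet> x}
                          \<subseteq> {y\<in>X. u \<bullet> y \<le> u \<bullet> x}) at_top"
proof -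
  have ev: "eventually (\<lambda>t. u \<bullet> x < u \<bullet> y \<longrightarrow> (t *\<^sub>R u + v) \<bullet> x < (t *\<^sub>R u + v) \<bullet> y) at_top" for y
  proof (cases "u \<bullet> x < u \<bullet> y")
    case True
    then have "0 < u \<bullet> (y - x)" by (simp add: inner_diff_right)
    from eventually_linear_pos[OF this, of "v \<bullet> (y - x)"] show ?thesis
      by eventually_elim (simp add: algebra_simps)
  qed simp
  then have "eventually (\<lambda>t. \<forall>y\<in>X. u \<bullet> x < u \<bullet> y \<longrightarrow> (t *\<^sub>R u + v) \<bullet> x < (t *\<^sub>R u + v) \<bullet> y) at_top"
    by (intro eventually_ball_finite[OF assms] ballI ev)
  then show ?thesis
    by eventually_elim (use not_le in blast)
qed

lemma cone_rank_strict_mono: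
  assumes fin: "finite X" and C: "proper_closed_convex_cone C" and "x \<in> X"
    and le: "cone_le C xb x" and not_le: "\<not> cone_le C x xb"
  shows "cone_rank X C xb < cone_rank X C x"
proof -
  obtain v where v: "v \<in> dual_cone C" "v \<bullet> (xb - x) < 0"
    using dual_cone_separation[OF C] not_le unfolding cone_le_def by blast
  obtain w0 where w0: "w0 \<in> dual_cone C" "cone_rank X C x = card {y\<in>X. w0 \<bullet> y \<le> w0 \<bullet> x}"
    using cone_rank_attained[OF fin] by blast
  obtain t :: real where "t \<ge> 0"
    and sub: "{y\<in>X. (t *\<^sub>R w0 + v) \<bullet> y \<le> (t *\<^sub>R w0 + v) \<bullet> x} \<subseteq> {y\<in>X. w0 \<bullet> y \<le> w0 \<bullet> x}"
    using eventually_conj[OF eventually_ge_at_top[of 0]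
        eventually_sublevel_perturbation_subset[OF fin, of w0 v x]]
    unfolding eventually_at_top_linorder by blast
  define w where "w = t *\<^sub>R w0 + v"
  have w_dual: "w \<in> dual_cone C"
    using w0(1) v(1) \<open>t \<ge> 0\<close> unfolding w_def dual_cone_def
    by (auto simp: inner_add_left intro!: add_nonneg_nonneg)
  have "w \<bullet> xb < w \<bullet> x"
  proof -
    have "0 \<le> w0 \<bullet> (x - xb)" using w0(1) le unfolding dual_cone_def cone_le_def by blast
    then have "t * (w0 \<bullet> xb) \<le> t * (w0 \<bullet> x)"
      using \<open>t \<ge> 0\<close> by (intro mult_left_mono) (simp_all add: inner_diff_right)
    moreover have "v \<bullet> xb < v \<bullet> x" using v(2) by (simp add: inner_diff_right)
    ultimately show ?thesis unfolding w_def by (simp add: inner_add_left)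
  qed
  then have "{y\<in>X. w \<bullet> y \<le> w \<bullet> xb} \<subseteq> {y\<in>X. w \<bullet> y \<le> w \<bullet> x}"
    and "x \<in> {y\<in>X. w \<bullet> y \<le> w \<bullet> x} - {y\<in>X. w \<bullet> y \<le> w \<bullet> xb}"
    using \<open>x \<in> X\<close> by auto
  then have strict: "{y\<in>X. w \<bullet> y \<le> w \<bullet> xb} \<subset> {y\<in>X. w \<bullet> y \<le> w \<bullet> x}"
    by blast
  have "cone_rank X C xb \<le> card {y\<in>X. w \<bullet> y \<le> w \<bullet> xb}"
    using cone_rank_le[OF fin w_dual] .
  also have "\<dots> < card {y\<in>X. w \<bullet> y \<le> w \<bullet> x}"
    using strict fin by (intro psubset_card_mono) auto
  also have "\<dots> \<le> card {y\<in>X. w0 \<bullet> y \<le> w0 \<bullet> x}"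
    using sub fin unfolding w_def by (intro card_mono) auto
  finally show ?thesis using w0(2) by simp
qed

lemma cone_maximal_if_cone_rank_Max:
  assumes fin: "finite X" and C: "proper_closed_convex_cone C" and "xb \<in> X"
    and max: "cone_rank X C xb = Max (cone_rank X C ` X)"
  shows "cone_maximal X C xb"
  unfolding cone_maximal_def
proof (intro conjI ballI impI \<open>xb \<in> X\<close>)
  fix x assume "x \<in> X" "cone_le C xb x"
  have "cone_rank X C x \<le> cone_rank X C xb"
    using fin \<open>x \<in> X\<close> unfolding max by simp
  then show "cone_le C x xb"
    using cone_rank_strict_mono[OF fin C \<open>x \<in> X\<close> \<open>cone_le C xb x\<close>] by (meson not_le)
qed

definition nonneg_orthant :: "'a::euclidean_space set" where
  "nonneg_orthant = {z. \<forall>b\<in>Basis. 0 \<le> b \<bullet> z}"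

lemma polyhedron_nonneg_orthant: "polyhedron (nonneg_orthant :: 'a::euclidean_space set)"
proof -
  have "nonneg_orthant = \<Inter> ((\<lambda>b. {z. b \<bullet> z \<ge> 0}) ` (Basis :: 'a set))"
    unfolding nonneg_orthant_def by auto
  moreover have "polyhedron (\<Inter> ((\<lambda>b. {z. b \<bullet> z \<ge> (0::real)}) ` (Basis :: 'a set)))"
    by (rule polyhedron_Inter) (auto intro: polyhedron_halfspace_ge)
  ultimately show ?thesis by simp
qed

lemma zero_in_nonneg_orthant: "0 \<in> nonneg_orthant"
  unfolding nonneg_orthant_def by simp

lemma Basis_subset_dual_nonneg_orthant: "Basis \<subseteq> dual_cone nonneg_orthant"
  unfolding dual_cone_def nonneg_orthant_def by auto

lemma proper_closed_convex_cone_nonneg_orthant: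
  "proper_closed_convex_cone (nonneg_orthant :: 'a::euclidean_space set)"
  unfolding proper_closed_convex_cone_def
proof (intro conjI)
  show "closed nonneg_orthant"
    by (rule polyhedron_imp_closed[OF polyhedron_nonneg_orthant])
  show "\<forall>s\<ge>0. \<forall>z\<in>nonneg_orthant. s *\<^sub>R z \<in> nonneg_orthant"
    unfolding nonneg_orthant_def by simp
  show "\<forall>y\<in>nonneg_orthant. \<forall>z\<in>nonneg_orthant. y + z \<in> nonneg_orthant"
    unfolding nonneg_orthant_def by (simp add: inner_add_right)
  show "nonneg_orthant \<noteq> {}"
    using zero_in_nonneg_orthant by blast
  obtain e :: 'a where "e \<in> Basis"
    using nonempty_Basis by blast
  have "\<not> 0 \<le> e \<bullet> (- e)"
    using \<open>e \<in> Basis\<close> by (simp add: inner_Basis)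
  with \<open>e \<in> Basis\<close> have "- e \<notin> nonneg_orthant"
    unfolding nonneg_orthant_def by blast
  then show "nonneg_orthant \<noteq> (UNIV :: 'a set)" by blast
qed

lemma pointed_cone_nonneg_orthant: "pointed_cone (nonneg_orthant :: 'a::euclidean_space set)"
proof -
  have "u = 0" if "u \<in> nonneg_orthant" "- u \<in> nonneg_orthant" for u :: 'a
  proof (rule euclidean_eqI)
    fix b :: 'a assume "b \<in> Basis"
    then show "u \<bullet> b = 0 \<bullet> b"
      using that unfolding nonneg_orthant_def by (force simp: inner_commute)
  qed
  with zero_in_nonneg_orthant show ?thesis
    unfolding pointed_cone_def by force
qed

lemma nonneg_orthant_maximal_not_rank_maximal:
  fixes e1 e2 :: "'a::euclidean_space"
  assumes e: "e1 \<in> Basis" "e2 \<in> Basis" "e1 \<noteq> e2"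
  defines "X \<equiv> {2 *\<^sub>R e1, 2 *\<^sub>R e2, e1 + e2}"
  shows "cone_maximal X nonneg_orthant (2 *\<^sub>R e1)"
    and "cone_rank X nonneg_orthant (2 *\<^sub>R e1) < cone_rank X nonneg_orthant (e1 + e2)"
proof -
  have ip: "e1 \<bullet> e1 = 1" "e2 \<bullet> e2 = 1" "e1 \<bullet> e2 = 0" "e2 \<bullet> e1 = 0"
    using e by (auto simp: inner_Basis)
  have "finite X" unfolding X_def by simp
  show "cone_maximal X nonneg_orthant (2 *\<^sub>R e1)"
    unfolding cone_maximal_def cone_le_def
  proof (intro conjI ballI impI)
    fix x assume "x \<in> X" "x - 2 *\<^sub>R e1 \<in> nonneg_orthant"
    then have "0 \<le> e1 \<bullet> (x - 2 *\<^sub>R e1)"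
      using e(1) unfolding nonneg_orthant_def by blast
    with \<open>x \<in> X\<close> have "x = 2 *\<^sub>R e1"
      unfolding X_def by (auto simp: inner_diff_right inner_add_right ip)
    then show "2 *\<^sub>R e1 - x \<in> nonneg_orthant"
      using zero_in_nonneg_orthant by simp
  qed (simp add: X_def)
  have "e2 \<in> dual_cone nonneg_orthant"
    using Basis_subset_dual_nonneg_orthant e(2) by blast
  then have "cone_rank X nonneg_orthant (2 *\<^sub>R e1) \<le> card {x\<in>X. e2 \<bullet> x \<le> e2 \<bullet> (2 *\<^sub>R e1)}"
    by (rule cone_rank_le[OF \<open>finite X\<close>])
  also have "{x\<in>X. e2 \<bullet> x \<le> e2 \<bullet> (2 *\<^sub>R e1)} = {2 *\<^sub>R e1}"
    unfolding X_def by (auto simp: inner_add_right ip)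
  finally have "cone_rank X nonneg_orthant (2 *\<^sub>R e1) \<le> 1"
    by simp
  moreover have "2 \<le> cone_rank X nonneg_orthant (e1 + e2)"
  proof (rule cone_rank_ge[OF \<open>finite X\<close>])
    fix w :: 'a
    let ?S = "{x\<in>X. w \<bullet> x \<le> w \<bullet> (e1 + e2)}"
    have "finite ?S"
      using \<open>finite X\<close> by simp
    have "2 *\<^sub>R e1 \<noteq> e1 + e2" "2 *\<^sub>R e2 \<noteq> e1 + e2"
      using e(3) by (auto simp: scaleR_2)
    then have card2: "card {2 *\<^sub>R e1, e1 + e2} = 2" "card {2 *\<^sub>R e2, e1 + e2} = 2"
      by simp_all
    consider "w \<bullet> e1 \<le> w \<bullet> e2" | "w \<bullet> e2 \<le> w \<bullet> e1"
      by linarith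
    then show "2 \<le> card ?S"
    proof cases
      case 1
      then have "{2 *\<^sub>R e1, e1 + e2} \<subseteq> ?S"
        unfolding X_def by (simp add: inner_add_right)
      then have "card {2 *\<^sub>R e1, e1 + e2} \<le> card ?S"
        by (rule card_mono[OF \<open>finite ?S\<close>])
      with card2(1) show ?thesis
        by simp
    next
      case 2
      then have "{2 *\<^sub>R e2, e1 + e2} \<subseteq> ?S"
        unfolding X_def by (simp add: inner_add_right)
      then have "card {2 *\<^sub>R e2, e1 + e2} \<le> card ?S"
        by (rule card_mono[OF \<open>finite ?S\<close>])
      with card2(2) show ?thesis
        by simp
    qed
  qed
  ultimately show "cone_rank X nonneg_orthant (2 *\<^sub>R e1) < cone_rank X nonneg_orthant (e1 + e2)"
    by linarith
qed

lemma cone_maximal_not_cone_rank_Max_exists: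
  assumes "DIM('a::euclidean_space) \<ge> 2"
  shows "\<exists>(X::'a set) C xb.
            finite X \<and> card X \<ge> 2 \<and> proper_closed_convex_cone C \<and> pointed_cone C
            \<and> polyhedron C \<and> xb \<in> X \<and> cone_maximal X C xb
            \<and> cone_rank X C xb \<noteq> Max (cone_rank X C ` X)"
proof -
  obtain S :: "'a set" where "S \<subseteq> Basis" "card S = 2"
    by (rule obtain_subset_with_card_n[OF assms])
  then obtain e1 e2 :: 'a where e: "e1 \<in> Basis" "e2 \<in> Basis" "e1 \<noteq> e2"
    unfolding card_2_iff by blast
  define X where "X = {2 *\<^sub>R e1, 2 *\<^sub>R e2, e1 + e2}"
  have "finite X" by (simp add: X_def)
  have "card {2 *\<^sub>R e1, 2 *\<^sub>R e2} = 2"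
    using e(3) by simp
  then have "2 \<le> card X"
    using \<open>finite X\<close> card_mono[of X "{2 *\<^sub>R e1, 2 *\<^sub>R e2}"] by (simp add: X_def)
  note example = nonneg_orthant_maximal_not_rank_maximal[OF e, folded X_def]
  have "cone_rank X nonneg_orthant (e1 + e2) \<le> Max (cone_rank X nonneg_orthant ` X)"
    using \<open>finite X\<close> by (simp add: X_def)
  with example(2)
  have "cone_rank X nonneg_orthant (2 *\<^sub>R e1) \<noteq> Max (cone_rank X nonneg_orthant ` X)"
    by linarith
  with example(1) \<open>finite X\<close> \<open>2 \<le> card X\<close> show ?thesis
    using proper_closed_convex_cone_nonneg_orthant pointed_cone_nonneg_orthant
      polyhedron_nonneg_orthant
    by (intro exI[of _ X] exI[of _ nonneg_orthant] exI[of _ "2 *\<^sub>R e1"])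
      (simp add: cone_maximal_def)
qed

theorem theorem2p3:
  assumes "DIM('a::euclidean_space) \<ge> 2"
  shows "(\<forall>(X::'a set) C xb.
            finite X \<and> card X \<ge> 2 \<and> proper_closed_convex_cone C \<and> pointed_cone C
            \<and> polyhedron C \<and> xb \<in> X \<and> cone_rank X C xb = Max (cone_rank X C ` X)
            \<longrightarrow> cone_maximal X C xb)
       \<and> (\<exists>(X::'a set) C xb.
            finite X \<and> card X \<ge> 2 \<and> proper_closed_convex_cone C \<and> pointed_cone C
            \<and> polyhedron C \<and> xb \<in> X \<and> cone_maximal X C xb
            \<and> cone_rank X C xb \<noteq> Max (cone_rank X C ` X))"
  using cone_maximal_if_cone_rank_Max cone_maximal_not_cone_rank_Max_exists[OF assms] by blast

end
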